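(* Let $V$ be a finite set and let $A$ be a real symmetric matrix indexed by $V$. Consider the statements: (i) $A$ has a perfect elimination ordering; (ii) $A$ has no weighted chordless cycle; (iii) every level graph of $A$ is chordal. Then (i) implies (ii), and (ii) implies (iii).
   Context: A perfect elimination ordering of $A$ is a linear order $\pi$ of $V$ with $A_{yz}\ge\min\{A_{xy},A_{xz}\}$ for all $x<_\pi y<_\pi z$. A walk $W=(v_0,\dots,v_p)$ of elements of $V$ is weighted chordless in $A$ if $A_{v_{i-1}v_{i+1}}<\min\{A_{v_{i-1}v_i},A_{v_{i+1}v_i}\}$ for $1\le i\le p-1$; it is a weighted chordless cycle if in addition $v_0=v_p$, the elements $v_0,\dots,v_{p-1}$ are distinct, and $A_{v_{p-1}v_1}<\min\{A_{v_{p-1}v_0},A_{v_0v_1}\}$. If $\alpha_0<\dots<\alpha_L$ are the distinct values of the entries of $A$, the level graph $G_\ell$ is the graph on $V$ with edges the pairs $\{x,y\}$ with $A_{xy}\ge\alpha_\ell$. A graph is chordal if it contains no chordless (induced) cycle of length at least 4. *)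

theory Defs
  imports Complex_Main
begin

text \<open>A matrix indexed by V is a function A :: 'a => 'a => real, considered on V x V.
A linear order of V is represented by a list ps with distinct ps and set ps = V;
x <_pi y iff x occurs at a smaller position than y.\<close>

definition symmetric_matrix_on :: "'a set \<Rightarrow> ('a \<Rightarrow> 'a \<Rightarrow> real) \<Rightarrow> bool" where
  "symmetric_matrix_on V A \<longleftrightarrow> (\<forall>x\<in>V. \<forall>y\<in>V. A x y = A y x)"

definition is_peo :: "'a set \<Rightarrow> ('a \<Rightarrow> 'a \<Rightarrow> real) \<Rightarrow> 'a list \<Rightarrow> bool" where
  "is_peo V A ps \<longleftrightarrow> distinct ps \<and> set ps = V \<and>
     (\<forall>i j k. i < j \<and> j < k \<and> k < length ps \<longrightarrow>
        A (ps ! j) (ps ! k) \<ge> min (A (ps ! i) (ps ! j)) (A (ps ! i) (ps ! k)))"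

definition has_peo :: "'a set \<Rightarrow> ('a \<Rightarrow> 'a \<Rightarrow> real) \<Rightarrow> bool" where
  "has_peo V A \<longleftrightarrow> (\<exists>ps. is_peo V A ps)"

text \<open>A walk (v_0,...,v_p) is the list ws with length ws = p + 1.\<close>

definition weighted_chordless_walk :: "'a set \<Rightarrow> ('a \<Rightarrow> 'a \<Rightarrow> real) \<Rightarrow> 'a list \<Rightarrow> bool" where
  "weighted_chordless_walk V A ws \<longleftrightarrow> ws \<noteq> [] \<and> set ws \<subseteq> V \<and>
     (\<forall>i. 1 \<le> i \<and> i + 1 < length ws \<longrightarrow>
        A (ws ! (i - 1)) (ws ! (i + 1)) < min (A (ws ! (i - 1)) (ws ! i)) (A (ws ! (i + 1)) (ws ! i)))"

definition weighted_chordless_cycle :: "'a set \<Rightarrow> ('a \<Rightarrow> 'a \<Rightarrow> real) \<Rightarrow> 'a list \<Rightarrow> bool" where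
  "weighted_chordless_cycle V A ws \<longleftrightarrow>
     (let p = length ws - 1 in
        p \<ge> 3 \<and> length ws = p + 1 \<and> weighted_chordless_walk V A ws \<and>
        ws ! 0 = ws ! p \<and> distinct (take p ws) \<and>
        A (ws ! (p - 1)) (ws ! 1) < min (A (ws ! (p - 1)) (ws ! 0)) (A (ws ! 0) (ws ! 1)))"

definition has_weighted_chordless_cycle :: "'a set \<Rightarrow> ('a \<Rightarrow> 'a \<Rightarrow> real) \<Rightarrow> bool" where
  "has_weighted_chordless_cycle V A \<longleftrightarrow> (\<exists>ws. weighted_chordless_cycle V A ws)"

definition level_graph :: "('a \<Rightarrow> 'a \<Rightarrow> real) \<Rightarrow> real \<Rightarrow> 'a \<Rightarrow> 'a \<Rightarrow> bool" where
  "level_graph A \<alpha> x y \<longleftrightarrow> x \<noteq> y \<and> A x y \<ge> \<alpha>"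

definition chordless_cycle :: "'a set \<Rightarrow> ('a \<Rightarrow> 'a \<Rightarrow> bool) \<Rightarrow> 'a list \<Rightarrow> bool" where
  "chordless_cycle V E cs \<longleftrightarrow> (let k = length cs in
     distinct cs \<and> set cs \<subseteq> V \<and>
     (\<forall>i<k. E (cs ! i) (cs ! ((i + 1) mod k))) \<and>
     (\<forall>i<k. \<forall>j<k. i \<noteq> j \<and> j \<noteq> (i + 1) mod k \<and> i \<noteq> (j + 1) mod k \<longrightarrow>
        \<not> E (cs ! i) (cs ! j)))"

definition chordal :: "'a set \<Rightarrow> ('a \<Rightarrow> 'a \<Rightarrow> bool) \<Rightarrow> bool" where
  "chordal V E \<longleftrightarrow> \<not> (\<exists>cs. length cs \<ge> 4 \<and> chordless_cycle V E cs)"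

end

theory Submission
  imports Defs
begin

text \<open>The vertex of a weighted chordless cycle that comes first in a perfect elimination
  ordering has both of its cycle neighbours later, so the ordering bounds the entry between
  the neighbours from below by the smaller of their entries with that vertex, which is exactly
  what chordlessness forbids. Conversely, an induced cycle of length at least 4 in the level
  graph at threshold \<open>\<alpha>\<close> is a weighted chordless cycle: its edges have entries \<open>\<ge> \<alpha>\<close> while
  the pair of vertices two steps apart is a non-edge, with entry \<open>< \<alpha>\<close>.\<close>

lemma is_peo_first_vertex:
  assumes peo: "is_peo V A ps" and sym: "symmetric_matrix_on V A"
    and "S \<subseteq> V" and "S \<noteq> {}"
  obtains x where "x \<in> S"
    and "\<And>y z. y \<in> S \<Longrightarrow> z \<in> S \<Longrightarrow> y \<noteq> x \<Longrightarrow> z \<noteq> x \<Longrightarrow> y \<noteq> z \<Longrightarrow>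
           min (A x y) (A x z) \<le> A y z"
proof -
  have set_ps: "set ps = V" and peo_ineq: "\<And>i j k. i < j \<Longrightarrow> j < k \<Longrightarrow> k < length ps \<Longrightarrow>
      min (A (ps ! i) (ps ! j)) (A (ps ! i) (ps ! k)) \<le> A (ps ! j) (ps ! k)"
    using peo unfolding is_peo_def by auto
  have "\<exists>n. n < length ps \<and> ps ! n \<in> S"
    using \<open>S \<subseteq> V\<close> \<open>S \<noteq> {}\<close> set_ps by (force simp: in_set_conv_nth)
  define n where "n = (LEAST n. n < length ps \<and> ps ! n \<in> S)"
  have n: "n < length ps" "ps ! n \<in> S"
    using LeastI_ex[OF \<open>\<exists>n. _\<close>] unfolding n_def by auto
  have later: "n < j" if "j < length ps" "ps ! j \<in> S" "ps ! j \<noteq> ps ! n" for j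
    using that Least_le[of "\<lambda>n. n < length ps \<and> ps ! n \<in> S" j] unfolding n_def
    by (metis le_neq_implies_less)
  show thesis
  proof (rule that[OF n(2)])
    fix y z assume "y \<in> S" "z \<in> S" "y \<noteq> ps ! n" "z \<noteq> ps ! n" "y \<noteq> z"
    then obtain j k where jk: "j < length ps" "k < length ps" "ps ! j = y" "ps ! k = z"
      using \<open>S \<subseteq> V\<close> set_ps by (metis in_set_conv_nth subsetD)
    have "n < j" "n < k" using later jk \<open>y \<in> S\<close> \<open>z \<in> S\<close> \<open>y \<noteq> ps ! n\<close> \<open>z \<noteq> ps ! n\<close> by auto
    have "A y z = A z y" using \<open>y \<in> S\<close> \<open>z \<in> S\<close> \<open>S \<subseteq> V\<close> sym
      unfolding symmetric_matrix_on_def by blast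
    moreover have "j \<noteq> k" using jk \<open>y \<noteq> z\<close> by auto
    ultimately show "min (A (ps ! n) y) (A (ps ! n) z) \<le> A y z"
      using peo_ineq[of n j k] peo_ineq[of n k j] \<open>n < j\<close> \<open>n < k\<close> jk
      by (cases "j < k") (auto simp: min.commute)
  qed
qed

lemma closed_walk_nth_eq:
  assumes "distinct (take p ws)" "ws ! 0 = ws ! p" "length ws = p + 1"
    and "a < b" "b \<le> p" "ws ! a = ws ! b"
  shows "a = 0 \<and> b = p"
proof (cases "b < p")
  case True
  then show ?thesis using assms nth_eq_iff_index_eq[of "take p ws" a b] by simp
next
  case False
  then have "ws ! a = ws ! 0" "a < p" using assms by auto
  then show ?thesis using assms False nth_eq_iff_index_eq[of "take p ws" a 0] by simp
qed

lemma weighted_chordless_cycle_neighbours: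
  assumes cyc: "weighted_chordless_cycle V A ws" and sym: "symmetric_matrix_on V A"
    and "x \<in> set ws"
  obtains y z where "y \<in> set ws" "z \<in> set ws" "y \<noteq> x" "z \<noteq> x" "y \<noteq> z"
    "A y z < A x y" "A y z < A x z"
proof -
  define p where "p = length ws - 1"
  from cyc have p: "p \<ge> 3" "length ws = p + 1" and closed: "ws ! 0 = ws ! p"
    and dist: "distinct (take p ws)" and set_ws: "set ws \<subseteq> V"
    and walk: "\<And>i. 1 \<le> i \<Longrightarrow> i + 1 < length ws \<Longrightarrow>
        A (ws ! (i - 1)) (ws ! (i + 1)) < min (A (ws ! (i - 1)) (ws ! i)) (A (ws ! (i + 1)) (ws ! i))"
    and closing: "A (ws ! (p - 1)) (ws ! 1) < min (A (ws ! (p - 1)) (ws ! 0)) (A (ws ! 0) (ws ! 1))"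
    unfolding weighted_chordless_cycle_def weighted_chordless_walk_def p_def Let_def by auto
  have nth_neq: "ws ! a \<noteq> ws ! b" if "a < b" "b \<le> p" "a \<noteq> 0 \<or> b \<noteq> p" for a b
    using closed_walk_nth_eq[OF dist closed p(2)] that by blast
  have sym_ws: "A (ws ! a) (ws ! b) = A (ws ! b) (ws ! a)" if "a \<le> p" "b \<le> p" for a b
    using sym set_ws that p(2) unfolding symmetric_matrix_on_def by (simp add: subset_iff)
  \<comment> \<open>The first vertex reappears as the last, so \<open>x\<close> sits at a position \<open>j \<in> {1..p}\<close>.\<close>
  obtain j where j: "1 \<le> j" "j \<le> p" "ws ! j = x"
  proof -
    obtain i where i: "i < length ws" "ws ! i = x" using \<open>x \<in> set ws\<close> by (metis in_set_conv_nth)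
    show thesis
    proof (cases "i = 0")
      case True
      then show thesis using that[of p] i closed p(1) by simp
    next
      case False
      then show thesis using that[of i] i p(2) by simp
    qed
  qed
  show thesis
  proof (cases "j < p")
    case True
    show thesis
    proof (rule that[of "ws ! (j - 1)" "ws ! (j + 1)"])
      show "ws ! (j - 1) \<in> set ws" "ws ! (j + 1) \<in> set ws" using True p by auto
      show "ws ! (j - 1) \<noteq> x" "ws ! (j + 1) \<noteq> x" "ws ! (j - 1) \<noteq> ws ! (j + 1)"
        using nth_neq[of "j - 1" j] nth_neq[of j "j + 1"] nth_neq[of "j - 1" "j + 1"] j True p(1)
        by auto
      show "A (ws ! (j - 1)) (ws ! (j + 1)) < A x (ws ! (j - 1))"
        "A (ws ! (j - 1)) (ws ! (j + 1)) < A x (ws ! (j + 1))"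
        using walk[of j] sym_ws[of j "j - 1"] sym_ws[of j "j + 1"] j True p(2) by auto
    qed
  next
    case False
    then have "x = ws ! 0" using j closed by simp
    have "1 < p - 1" "p - 1 < p" "p - 1 \<noteq> p" using p(1) by auto
    show thesis
    proof (rule that[of "ws ! (p - 1)" "ws ! 1"])
      show "ws ! (p - 1) \<in> set ws" "ws ! 1 \<in> set ws" using p by auto
      show "ws ! (p - 1) \<noteq> x" "ws ! 1 \<noteq> x" "ws ! (p - 1) \<noteq> ws ! 1"
        using nth_neq[of 0 "p - 1"] nth_neq[of 0 1] nth_neq[of 1 "p - 1"] \<open>x = ws ! 0\<close>
          \<open>1 < p - 1\<close> \<open>p - 1 < p\<close> \<open>p - 1 \<noteq> p\<close>
        by auto
      show "A (ws ! (p - 1)) (ws ! 1) < A x (ws ! (p - 1))" "A (ws ! (p - 1)) (ws ! 1) < A x (ws ! 1)"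
        using closing sym_ws[of 0 "p - 1"] \<open>x = ws ! 0\<close> p by auto
    qed
  qed
qed

lemma is_peo_no_weighted_chordless_cycle:
  assumes "is_peo V A ps" "symmetric_matrix_on V A"
  shows "\<not> weighted_chordless_cycle V A ws"
proof
  assume cyc: "weighted_chordless_cycle V A ws"
  then have "set ws \<subseteq> V" "set ws \<noteq> {}"
    unfolding weighted_chordless_cycle_def weighted_chordless_walk_def Let_def by auto
  then obtain x where "x \<in> set ws" and first: "\<And>y z. y \<in> set ws \<Longrightarrow> z \<in> set ws \<Longrightarrow>
      y \<noteq> x \<Longrightarrow> z \<noteq> x \<Longrightarrow> y \<noteq> z \<Longrightarrow> min (A x y) (A x z) \<le> A y z"
    using is_peo_first_vertex assms by metis
  obtain y z where "y \<in> set ws" "z \<in> set ws" "y \<noteq> x" "z \<noteq> x" "y \<noteq> z"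
    "A y z < A x y" "A y z < A x z"
    using weighted_chordless_cycle_neighbours[OF cyc assms(2) \<open>x \<in> set ws\<close>] by metis
  with first[of y z] show False by linarith
qed

lemma mod_add_neq:
  fixes n d k :: nat
  assumes "0 < d" "d < k"
  shows "(n + d) mod k \<noteq> n mod k"
proof
  assume "(n + d) mod k = n mod k"
  then have "k dvd d" using mod_eq_dvd_iff_nat[of n "n + d" k] by simp
  then show False using assms by (simp add: nat_dvd_not_less)
qed

lemma level_graph_chordless_cycle_triangle:
  assumes sym: "symmetric_matrix_on V A"
    and cc: "chordless_cycle V (level_graph A \<alpha>) cs" and len4: "length cs \<ge> 4"
  defines "k \<equiv> length cs"
  shows "A (cs ! (n mod k)) (cs ! ((n + 2) mod k))
           < min (A (cs ! (n mod k)) (cs ! (Suc n mod k))) (A (cs ! ((n + 2) mod k)) (cs ! (Suc n mod k)))"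
proof -
  have k4: "4 \<le> k" using len4 k_def by simp
  have dist: "distinct cs" and set_cs: "set cs \<subseteq> V"
    and edge: "\<And>i. i < k \<Longrightarrow> \<alpha> \<le> A (cs ! i) (cs ! ((i + 1) mod k))"
    and chord: "\<And>i j. i < k \<Longrightarrow> j < k \<Longrightarrow> i \<noteq> j \<Longrightarrow> j \<noteq> (i + 1) mod k \<Longrightarrow> i \<noteq> (j + 1) mod k
        \<Longrightarrow> \<not> (cs ! i \<noteq> cs ! j \<and> \<alpha> \<le> A (cs ! i) (cs ! j))"
    using cc unfolding chordless_cycle_def level_graph_def Let_def k_def by auto
  have mods: "n mod k < k" "Suc n mod k < k" "(n + 2) mod k < k" using k4 by auto
  have sym_cs: "A (cs ! i) (cs ! j) = A (cs ! j) (cs ! i)" if "i < k" "j < k" for i j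
    using sym set_cs that unfolding symmetric_matrix_on_def k_def by (simp add: subset_iff)
  have succ: "(m mod k + 1) mod k = Suc m mod k" for m by (simp add: mod_Suc_eq)
  have e1: "\<alpha> \<le> A (cs ! (n mod k)) (cs ! (Suc n mod k))"
    using edge[OF mods(1)] succ by simp
  have e2: "\<alpha> \<le> A (cs ! ((n + 2) mod k)) (cs ! (Suc n mod k))"
    using edge[OF mods(2)] succ[of "Suc n"] sym_cs[OF mods(2,3)] by simp
  \<comment> \<open>Positions \<open>n\<close> and \<open>n + 2\<close> are distinct and non-adjacent only because \<open>k > 3\<close>.\<close>
  have neq: "(n + 2) mod k \<noteq> n mod k" "(n + 2) mod k \<noteq> Suc n mod k" "Suc (n + 2) mod k \<noteq> n mod k"
    using mod_add_neq[of 2 k n] mod_add_neq[of 1 k "Suc n"] mod_add_neq[of 3 k n] k4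
    by (simp_all add: numeral_3_eq_3)
  have "(n + 2) mod k \<noteq> (n mod k + 1) mod k" "n mod k \<noteq> ((n + 2) mod k + 1) mod k"
    using neq(2,3) succ[of n] succ[of "n + 2"] by simp_all
  moreover have "cs ! (n mod k) \<noteq> cs ! ((n + 2) mod k)"
    using neq(1) nth_eq_iff_index_eq[OF dist] mods unfolding k_def by simp
  ultimately have "A (cs ! (n mod k)) (cs ! ((n + 2) mod k)) < \<alpha>"
    using chord[OF mods(1) mods(3)] neq(1) by fastforce
  then show ?thesis using e1 e2 by simp
qed

lemma level_graph_chordless_cycle_weighted:
  assumes sym: "symmetric_matrix_on V A"
    and cc: "chordless_cycle V (level_graph A \<alpha>) cs" and len4: "length cs \<ge> 4"
  shows "weighted_chordless_cycle V A (cs @ [cs ! 0])"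
proof -
  define k where "k = length cs"
  define ws where "ws = cs @ [cs ! 0]"
  have k4: "4 \<le> k" using len4 k_def by simp
  have dist: "distinct cs" and set_cs: "set cs \<subseteq> V"
    using cc unfolding chordless_cycle_def Let_def by auto
  have "0 < length cs" "1 < length cs" using k4 unfolding k_def by linarith+
  then have cs_V: "cs ! 0 \<in> V" "cs ! 1 \<in> V" using set_cs by (meson nth_mem subsetD)+
  have len: "length ws = k + 1" by (simp add: ws_def k_def)
  have ws_nth: "ws ! i = cs ! (i mod k)" if "i \<le> k" for i
    using that k4 by (cases "i = k") (auto simp: ws_def k_def nth_append)
  have triangle: "A (cs ! (n mod k)) (cs ! ((n + 2) mod k))
      < min (A (cs ! (n mod k)) (cs ! (Suc n mod k))) (A (cs ! ((n + 2) mod k)) (cs ! (Suc n mod k)))"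
    for n using level_graph_chordless_cycle_triangle[OF sym cc len4] unfolding k_def .
  have walk: "A (ws ! (i - 1)) (ws ! (i + 1)) < min (A (ws ! (i - 1)) (ws ! i)) (A (ws ! (i + 1)) (ws ! i))"
    if "1 \<le> i" "i + 1 < length ws" for i
  proof -
    have "i - 1 + 2 = i + 1" "Suc (i - 1) = i" using that by auto
    then show ?thesis
      using triangle[of "i - 1"] ws_nth[of "i - 1"] ws_nth[of i] ws_nth[of "i + 1"] that len by simp
  qed
  have closing: "A (ws ! (k - 1)) (ws ! 1) < min (A (ws ! (k - 1)) (ws ! 0)) (A (ws ! 0) (ws ! 1))"
  proof -
    have idx: "(k - 1 + 2) mod k = 1" "Suc (k - 1) mod k = 0"
      using k4 by (auto simp: Suc_diff_le mod_Suc)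
    have "A (cs ! 1) (cs ! 0) = A (cs ! 0) (cs ! 1)"
      using sym cs_V unfolding symmetric_matrix_on_def by simp
    then show ?thesis using triangle[of "k - 1"] idx ws_nth[of "k - 1"] ws_nth[of 0] ws_nth[of 1] k4
      by simp
  qed
  have "set ws \<subseteq> V" "take k ws = cs" "ws ! 0 = ws ! k"
    using set_cs cs_V by (auto simp: ws_def k_def nth_append)
  then have "weighted_chordless_cycle V A ws"
    unfolding weighted_chordless_cycle_def weighted_chordless_walk_def Let_def
    using len k4 dist walk closing by (auto simp: ws_def)
  then show ?thesis by (simp add: ws_def)
qed

theorem lemma4:
  fixes V :: "'a set" and A :: "'a \<Rightarrow> 'a \<Rightarrow> real"
  assumes "finite V" and "symmetric_matrix_on V A"
  shows "(has_peo V A \<longrightarrow> \<not> has_weighted_chordless_cycle V A) \<and>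
         (\<not> has_weighted_chordless_cycle V A \<longrightarrow>
            (\<forall>\<alpha> \<in> {A x y | x y. x \<in> V \<and> y \<in> V}. chordal V (level_graph A \<alpha>)))"
proof (intro conjI impI ballI)
  assume "has_peo V A"
  then show "\<not> has_weighted_chordless_cycle V A"
    using is_peo_no_weighted_chordless_cycle[OF _ assms(2)]
    unfolding has_peo_def has_weighted_chordless_cycle_def by blast
next
  fix \<alpha> assume "\<not> has_weighted_chordless_cycle V A"
  then show "chordal V (level_graph A \<alpha>)"
    using level_graph_chordless_cycle_weighted[OF assms(2)]
    unfolding chordal_def has_weighted_chordless_cycle_def by blast
qed

end
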